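(* Let $p$ be an odd prime, $m$ a positive integer, $q=p^m$. Let $l,r,s,e$ be positive integers such that $l\ge3$ is odd, $\gcd(l,e)=1$, and $q-1=ls$. If $P(x)=x^r(x^{es}+1)$ is a permutation polynomial of $\mathbb{F}_q$, then $\gcd(r,s)=1$, $p\mid 2^s-1$, and $l\nmid 2r+es$.
   Context: A permutation polynomial of $\mathbb{F}_q$ is a polynomial inducing a bijection $\mathbb{F}_q\to\mathbb{F}_q$. *)

theory Defs
  imports "HOL-Computational_Algebra.Polynomial" "HOL-Library.Cardinality"
begin

definition permutation_polynomial :: "'a::{finite,field} poly \<Rightarrow> bool" where
  "permutation_polynomial P \<longleftrightarrow> bij (poly P)"

end

theory Submission
  imports Defs
begin

text \<open>
  Write \<open>P(x) = x^r (x^n + 1)\<close> and \<open>\<mu>\<^sub>d\<close> for the \<open>d\<close>-th roots of unity in \<open>\<bbbF>\<^sub>q\<close>;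
  for \<open>d\<close> dividing \<open>q - 1\<close> there are exactly \<open>d\<close> of them, and the map \<open>x \<mapsto> x^d\<close> is
  \<open>d\<close>-to-one from \<open>\<bbbF>\<^sub>q\<^sup>*\<close> onto \<open>\<mu>\<^bsub>(q-1)/d\<^esub>\<close>.

  If \<open>g = gcd(r, s) > 1\<close>, a root \<open>z \<noteq> 1\<close> of \<open>\<mu>\<^sub>g\<close> satisfies \<open>P(z) = 2 = P(1)\<close>.
  If \<open>l\<close> divides \<open>2r + es\<close>, a root \<open>x \<noteq> 1\<close> of \<open>\<mu>\<^sub>l\<close> satisfies \<open>P(1/x) = P(x)\<close> although
  \<open>1/x \<noteq> x\<close>, as \<open>l\<close> is odd.
  Finally, \<open>P\<close> permutes \<open>\<bbbF>\<^sub>q\<^sup>*\<close>, so \<open>\<Prod>\<^sub>x P(x) = \<Prod>\<^sub>x x\<close>; since this product squares to 1 and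
  \<open>r\<close> is odd (\<open>s\<close> is even and coprime to \<open>r\<close>), \<open>\<Prod>\<^sub>x (x^{es} + 1) = 1\<close>. Grouping the factors
  by \<open>y = x^s \<in> \<mu>\<^sub>l\<close> and using that \<open>y \<mapsto> y^e\<close> permutes \<open>\<mu>\<^sub>l\<close> turns the left-hand side into
  \<open>(\<Prod>\<^bsub>y\<in>\<mu>\<^sub>l\<^esub> (y + 1))^s = 2^s\<close>, hence \<open>p\<close> divides \<open>2^s - 1\<close>.
\<close>

definition roots_of_unity :: "nat \<Rightarrow> 'a::monoid_mult set" where
  "roots_of_unity d = {x. x ^ d = 1}"

lemma mem_roots_of_unity [simp]: "x \<in> roots_of_unity d \<longleftrightarrow> x ^ d = 1"
  by (simp add: roots_of_unity_def)

lemma zero_notin_roots_of_unity: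
  assumes "d > 0"
  shows "(0::'a::idom) \<notin> roots_of_unity d"
  using assms by (simp add: power_0_left)

lemma monom_minus_const_neq_0:
  assumes "d > 0"
  shows "monom (1::'a::comm_ring_1) d - [:c:] \<noteq> 0"
proof
  assume "monom 1 d - [:c:] = 0"
  then have "coeff (monom 1 d - [:c:]) d = 0" by simp
  with assms show False by (cases d) simp_all
qed

lemma power_eq_set_eq_poly_roots:
  "{x::'a::comm_ring_1. x ^ d = c} = {x. poly (monom 1 d - [:c:]) x = 0}"
  by (simp add: poly_monom)

lemma finite_power_eq:
  assumes "d > 0"
  shows "finite {x::'a::idom. x ^ d = c}"
  unfolding power_eq_set_eq_poly_roots
  by (rule poly_roots_finite[OF monom_minus_const_neq_0[OF assms]])

lemma card_power_eq_le:
  assumes "d > 0"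
  shows "card {x::'a::idom. x ^ d = c} \<le> d"
proof -
  have "degree (monom 1 d - [:c:]) \<le> d"
    by (metis degree_diff_le degree_monom_le degree_pCons_0 le0)
  then show ?thesis
    unfolding power_eq_set_eq_poly_roots
    using card_poly_roots_bound[OF monom_minus_const_neq_0[OF assms, where 'a='a and c=c]] by linarith
qed

lemma finite_roots_of_unity:
  assumes "d > 0"
  shows "finite (roots_of_unity d :: 'a::idom set)"
  unfolding roots_of_unity_def using finite_power_eq[OF assms] .

lemma inj_on_power_roots_of_unity:
  assumes "coprime k l"
  shows "inj_on (\<lambda>y::'a::monoid_mult. y ^ k) (roots_of_unity l)"
proof (cases "k = 0")
  case True
  with assms show ?thesis by (auto intro: inj_onI)
next
  case False
  with assms obtain a b where bezout: "k * a = l * b + 1"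
    using bezout_nat[of k l] by auto
  show ?thesis
  proof (rule inj_onI)
    fix y z :: 'a
    assume "y \<in> roots_of_unity l" "z \<in> roots_of_unity l" and eq: "y ^ k = z ^ k"
    then have "y ^ l = 1" "z ^ l = 1" by simp_all
    have "y ^ (l * b + 1) = z ^ (l * b + 1)"
      unfolding bezout[symmetric] power_mult eq ..
    with \<open>y ^ l = 1\<close> \<open>z ^ l = 1\<close> show "y = z" by (simp add: power_add power_mult)
  qed
qed

lemma bij_betw_power_roots_of_unity:
  assumes "coprime k l" "l > 0"
  shows "bij_betw (\<lambda>y::'a::idom. y ^ k) (roots_of_unity l) (roots_of_unity l)"
proof -
  have "(y ^ k) ^ l = 1" if "y ^ l = 1" for y :: 'a
    unfolding power_mult[symmetric] mult.commute[of k l] power_mult that by simp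
  then have "(\<lambda>y. y ^ k) ` roots_of_unity l \<subseteq> (roots_of_unity l :: 'a set)"
    by auto
  from endo_inj_surj[OF finite_roots_of_unity[OF assms(2)] this
      inj_on_power_roots_of_unity[OF assms(1)]]
  show ?thesis
    using inj_on_power_roots_of_unity[OF assms(1)] by (simp add: bij_betw_def)
qed

lemma prod_roots_of_unity_plus_one:
  assumes "odd l"
  shows "(\<Prod>y\<in>roots_of_unity l. y + 1) = (2::'a::idom)"
proof -
  let ?S = "roots_of_unity l - {1::'a}"
  have "l > 0" using assms by (simp add: odd_pos)
  then have "finite ?S" by (simp add: finite_roots_of_unity)
  have "bij_betw (\<lambda>y. y ^ 2) ?S ?S"
    using assms \<open>l > 0\<close> by (intro bij_betw_DiffI bij_betw_power_roots_of_unity) auto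
  from prod.reindex_bij_betw[OF this, of "\<lambda>y. 1 - y"]
  have "(\<Prod>y\<in>?S. 1 - y) = (\<Prod>y\<in>?S. 1 - y ^ 2)" by simp
  also have "\<dots> = (\<Prod>y\<in>?S. y + 1) * (\<Prod>y\<in>?S. 1 - y)"
    by (simp flip: prod.distrib add: power2_eq_square algebra_simps)
  moreover have "(\<Prod>y\<in>?S. 1 - y) \<noteq> 0"
    using \<open>finite ?S\<close> by simp
  ultimately have "(\<Prod>y\<in>?S. y + 1) = 1" by simp
  moreover have "(\<Prod>y\<in>roots_of_unity l. y + 1) = (1 + 1) * (\<Prod>y\<in>?S. y + 1)"
    using \<open>l > 0\<close> by (intro prod.remove finite_roots_of_unity) simp_all
  ultimately show ?thesis by simp
qed

lemma card_field_gt_1: "CARD('a::{finite,field}) > 1"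
proof -
  have "card {0, 1::'a} \<le> CARD('a)" by (rule card_mono) auto
  then show ?thesis by simp
qed

lemma CHAR_dvd_card_field: "CHAR('a::{finite,field}) dvd CARD('a)"
proof -
  have "(\<Sum>x\<in>UNIV. x + 1) = (\<Sum>x\<in>UNIV. x :: 'a)"
    by (rule sum.reindex_bij_witness[of _ "\<lambda>x. x - 1" "\<lambda>x. x + 1"]) auto
  then have "of_nat CARD('a) = (0::'a)" by (simp add: sum.distrib)
  then show ?thesis by (simp add: of_nat_eq_0_iff_char_dvd)
qed

lemma CHAR_eq_prime:
  assumes "prime p" "CARD('a::{finite,field}) = p ^ m"
  shows "CHAR('a) = p"
proof -
  have "prime CHAR('a)"
    by (intro prime_CHAR_semidom finite_imp_CHAR_pos) simp
  moreover have "CHAR('a) dvd p"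
    using CHAR_dvd_card_field[where 'a='a] assms \<open>prime CHAR('a)\<close> prime_dvd_power by metis
  ultimately show ?thesis using assms(1) by (simp add: primes_dvd_imp_eq)
qed

lemma card_minus_one_factors_pos:
  assumes "d * d' = CARD('a::{finite,field}) - 1"
  shows "d > 0" "d' > 0"
proof -
  have "d * d' > 0"
    using assms card_field_gt_1[where 'a='a] by linarith
  then show "d > 0" "d' > 0" by simp_all
qed

lemma card_nonzero_field: "card (- {0::'a::{finite,field}}) = CARD('a) - 1"
  by (simp add: Compl_eq_Diff_UNIV card_Diff_subset)

lemma power_card_minus_one_eq_1:
  fixes x :: "'a::{finite,field}"
  assumes "x \<noteq> 0"
  shows "x ^ (CARD('a) - 1) = 1"
proof -
  have "(\<Prod>y\<in>-{0}. x * y) = (\<Prod>y\<in>-{0}. y)"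
    by (rule prod.reindex_bij_witness[of _ "\<lambda>y. y / x" "\<lambda>y. x * y"]) (use assms in auto)
  then show ?thesis
    by (simp add: prod.distrib card_nonzero_field)
qed

lemma prod_nonzero_squared:
  "(\<Prod>x\<in>-{0::'a::{finite,field}}. x) ^ 2 = 1"
proof -
  have "(\<Prod>x\<in>-{0::'a}. inverse x) = (\<Prod>x\<in>-{0}. x)"
    by (rule prod.reindex_bij_witness[of _ inverse inverse]) auto
  then have "(\<Prod>x\<in>-{0::'a}. x) ^ 2 = (\<Prod>x\<in>-{0}. x) * (\<Prod>x\<in>-{0}. inverse x)"
    by (simp add: power2_eq_square)
  also have "\<dots> = (\<Prod>x\<in>-{0::'a}. x * inverse x)"
    by (rule prod.distrib[symmetric])
  also have "\<dots> = 1" by (rule prod.neutral) simp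
  finally show ?thesis .
qed

lemma power_in_roots_of_unity:
  fixes x :: "'a::{finite,field}"
  assumes "d * d' = CARD('a) - 1" "x \<noteq> 0"
  shows "x ^ d \<in> roots_of_unity d'"
  using power_card_minus_one_eq_1[OF assms(2)] assms(1) by (simp flip: power_mult)

lemma card_power_fibre:
  fixes y :: "'a::{finite,field}"
  assumes dd': "d * d' = CARD('a) - 1" and y: "y \<in> roots_of_unity d'"
  shows "card {x. x ^ d = y} = d"
proof -
  let ?F = "\<lambda>y. {x::'a. x ^ d = y}"
  note pos = card_minus_one_factors_pos[OF dd']
  have "d * d' = card (- {0::'a})"
    by (simp add: card_nonzero_field dd')
  also have "- {0} = (\<Union>y\<in>roots_of_unity d'. ?F y)"
    using power_in_roots_of_unity[OF dd'] pos by (auto simp: power_0_left) (metis)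
  also have "card \<dots> = (\<Sum>y\<in>roots_of_unity d'. card (?F y))"
    by (rule card_UN_disjoint) auto
  finally have sum_fibres: "d * d' = (\<Sum>y\<in>roots_of_unity d'. card (?F y))" .
  show ?thesis
  proof (rule ccontr)
    assume "card (?F y) \<noteq> d"
    have "(\<Sum>y\<in>roots_of_unity d'. card (?F y)) < (\<Sum>y::'a\<in>roots_of_unity d'. d)"
    proof (rule sum_strict_mono_ex1)
      show "\<forall>y\<in>roots_of_unity d'. card (?F y) \<le> d"
        using card_power_eq_le[OF pos(1)] by blast
      show "\<exists>y\<in>roots_of_unity d'. card (?F y) < d"
        using y \<open>card (?F y) \<noteq> d\<close> card_power_eq_le[OF pos(1), of y]
        by (auto intro!: bexI[of _ y])
    qed simp
    also have "\<dots> \<le> d' * d"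
      using card_power_eq_le[OF pos(2), where 'a='a and c=1]
      by (simp add: roots_of_unity_def)
    finally show False
      using sum_fibres by (simp add: mult.commute)
  qed
qed

lemma card_roots_of_unity:
  assumes "d dvd CARD('a::{finite,field}) - 1"
  shows "card (roots_of_unity d :: 'a set) = d"
proof -
  obtain d' where "d * d' = CARD('a) - 1" using assms by (metis dvdE)
  from card_power_fibre[OF this, of 1] show ?thesis by (simp add: roots_of_unity_def)
qed

lemma ex_nontrivial_root_of_unity:
  assumes "d dvd CARD('a) - 1" "d \<noteq> 1"
  obtains z :: "'a::{finite,field}" where "z ^ d = 1" "z \<noteq> 1"
proof -
  have "d > 0"
    using assms(1) card_field_gt_1[where 'a='a] by (meson dvd_pos_nat zero_less_diff)
  have "\<not> roots_of_unity d \<subseteq> {1::'a}"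
  proof
    assume sub: "roots_of_unity d \<subseteq> {1::'a}"
    have "card (roots_of_unity d :: 'a set) \<le> 1"
      using card_mono[OF _ sub] by simp
    with card_roots_of_unity[OF assms(1)] \<open>d > 0\<close> assms(2) show False by simp
  qed
  then obtain z :: 'a where "z \<in> roots_of_unity d" "z \<noteq> 1" by blast
  then show ?thesis using that by simp
qed

lemma prod_nonzero_power_eq:
  fixes f :: "'a::{finite,field} \<Rightarrow> 'b::comm_monoid_mult"
  assumes "d * d' = CARD('a) - 1"
  shows "(\<Prod>x\<in>-{0}. f (x ^ d)) = (\<Prod>y\<in>roots_of_unity d'. f y ^ d)"
proof -
  have "(\<Prod>x\<in>-{0}. f (x ^ d)) = (\<Prod>y\<in>roots_of_unity d'. \<Prod>x\<in>{x\<in>-{0}. x ^ d = y}. f (x ^ d))"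
    by (intro prod.group[symmetric])
      (auto simp del: mem_roots_of_unity intro: power_in_roots_of_unity[OF assms])
  also have "\<dots> = (\<Prod>y\<in>roots_of_unity d'. f y ^ d)"
  proof (rule prod.cong)
    fix y :: 'a assume y: "y \<in> roots_of_unity d'"
    then have "y \<noteq> 0"
      using zero_notin_roots_of_unity[OF card_minus_one_factors_pos(2)[OF assms]] by blast
    moreover have "d > 0" using card_minus_one_factors_pos(1)[OF assms] .
    ultimately have "{x\<in>-{0}. x ^ d = y} = {x. x ^ d = y}" by (auto simp: power_0_left)
    then show "(\<Prod>x\<in>{x\<in>-{0}. x ^ d = y}. f (x ^ d)) = f y ^ d"
      using card_power_fibre[OF assms y] by simp
  qed simp
  finally show ?thesis .
qed

lemma perm_binomial_common_divisor:
  fixes r n d :: nat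
  assumes bij: "bij (\<lambda>x::'a::{finite,field}. x ^ r * (x ^ n + 1))"
    and "d dvd r" "d dvd n" "d dvd CARD('a) - 1"
  shows "d = 1"
proof (rule ccontr)
  assume "d \<noteq> 1"
  with assms(4) obtain z :: 'a where "z ^ d = 1" "z \<noteq> 1"
    by (rule ex_nontrivial_root_of_unity)
  with assms(2,3) have "z ^ r = 1" "z ^ n = 1"
    by (auto elim!: dvdE simp: power_mult)
  then have "z ^ r * (z ^ n + 1) = 1 ^ r * (1 ^ n + 1)" by simp
  with bij_is_inj[OF bij] have "z = 1" by (rule injD)
  with \<open>z \<noteq> 1\<close> show False ..
qed

lemma perm_binomial_not_dvd:
  fixes r n l :: nat
  assumes bij: "bij (\<lambda>x::'a::{finite,field}. x ^ r * (x ^ n + 1))"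
    and "l dvd CARD('a) - 1" "odd l" "l \<noteq> 1"
  shows "\<not> l dvd 2 * r + n"
proof
  assume dvd: "l dvd 2 * r + n"
  obtain x :: 'a where x: "x ^ l = 1" "x \<noteq> 1"
    using ex_nontrivial_root_of_unity[OF assms(2,4)] by blast
  then have "x \<noteq> 0" using odd_pos[OF \<open>odd l\<close>] by (auto simp: power_0_left)
  have "inj_on (\<lambda>y::'a. y ^ 2) (roots_of_unity l)"
    using \<open>odd l\<close> by (intro inj_on_power_roots_of_unity) simp
  then have "x ^ 2 \<noteq> 1"
    using x inj_onD[of "\<lambda>y::'a. y ^ 2" "roots_of_unity l" x 1] by auto
  have "x ^ (2 * r + n) = 1"
    using dvd x by (auto elim!: dvdE simp: power_mult)
  then have "x ^ r * x ^ r * x ^ n = 1" by (simp add: power_add mult_2)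
  then have "inverse x ^ r * (inverse x ^ n + 1) = x ^ r * (x ^ n + 1)"
    using \<open>x \<noteq> 0\<close> by (simp add: power_inverse field_simps)
  with bij have "inverse x = x" by (auto dest: bij_is_inj injD)
  then have "x ^ 2 = 1"
    using \<open>x \<noteq> 0\<close> by (metis power2_eq_square right_inverse)
  with \<open>x ^ 2 \<noteq> 1\<close> show False ..
qed

lemma perm_binomial_two_power_eq_1:
  fixes r e l s :: nat
  assumes bij: "bij (\<lambda>x::'a::{finite,field}. x ^ r * (x ^ (e * s) + 1))"
    and ls: "l * s = CARD('a) - 1" and "odd l" "coprime l e" "odd r"
  shows "(2::'a) ^ s = 1"
proof -
  define P where "P x = x ^ r * (x ^ (e * s) + 1)" for x :: 'a
  define W where "W = (\<Prod>x\<in>-{0::'a}. x)"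
  have "W \<noteq> 0" by (simp add: W_def)
  have "W ^ r = W"
    using prod_nonzero_squared[where 'a='a] \<open>odd r\<close>
    by (auto elim!: oddE simp: W_def power_add power_mult)
  have "P 0 = 0" using odd_pos[OF \<open>odd r\<close>] by (simp add: P_def power_0_left)
  with bij have "bij_betw P (-{0}) (-{0})"
    by (auto intro!: bij_betw_DiffI simp: P_def[abs_def] Compl_eq_Diff_UNIV)
  then have "W = (\<Prod>x\<in>-{0}. P x)"
    using prod.reindex_bij_betw[of P "-{0}" "-{0}" "\<lambda>x. x"] by (simp add: W_def)
  also have "\<dots> = W ^ r * (\<Prod>x\<in>-{0}. (x ^ s) ^ e + 1)"
    by (simp add: P_def W_def prod.distrib prod_power_distrib mult.commute flip: power_mult)
  finally have "(\<Prod>x\<in>-{0::'a}. (x ^ s) ^ e + 1) = 1"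
    using \<open>W ^ r = W\<close> \<open>W \<noteq> 0\<close> by simp
  moreover have "(\<Prod>x\<in>-{0::'a}. (x ^ s) ^ e + 1) = (\<Prod>y\<in>roots_of_unity l. y ^ e + 1) ^ s"
    using prod_nonzero_power_eq[of s l "\<lambda>y::'a. y ^ e + 1"] ls
    by (simp add: mult.commute prod_power_distrib)
  moreover have "bij_betw (\<lambda>y::'a. y ^ e) (roots_of_unity l) (roots_of_unity l)"
    using \<open>coprime l e\<close> \<open>odd l\<close>
    by (intro bij_betw_power_roots_of_unity) (simp_all add: coprime_commute odd_pos)
  then have "(\<Prod>y\<in>roots_of_unity l. y ^ e + 1) = (\<Prod>y\<in>roots_of_unity l. y + (1::'a))"
    by (rule prod.reindex_bij_betw)
  ultimately show ?thesis
    using prod_roots_of_unity_plus_one[OF \<open>odd l\<close>, where 'a='a] by simp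
qed

theorem theorem4p1:
  fixes p m l r s e :: nat
  assumes "prime p" and "odd p" and "m > 0"
    and "CARD('a) = p ^ m"
    and "l > 0" and "r > 0" and "s > 0" and "e > 0"
    and "l \<ge> 3" and "odd l" and "coprime l e"
    and "CARD('a) - 1 = l * s"
    and "permutation_polynomial
           (monom (1::'a::{finite,field}) r * (monom 1 (e * s) + 1))"
  shows "coprime r s \<and> p dvd (2 ^ s - 1) \<and> \<not> l dvd (2 * r + e * s)"
proof -
  have "poly (monom 1 r * (monom 1 (e * s) + 1)) = (\<lambda>x::'a. x ^ r * (x ^ (e * s) + 1))"
    by (simp add: fun_eq_iff poly_monom)
  with assms(13) have bij: "bij (\<lambda>x::'a. x ^ r * (x ^ (e * s) + 1))"
    by (simp add: permutation_polynomial_def)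
  have "gcd r s = 1"
    using assms(12) by (intro perm_binomial_common_divisor[OF bij]) auto
  then have "coprime r s" by (simp add: coprime_iff_gcd_eq_1)
  have "even (CARD('a) - 1)"
    using assms(2,4) card_field_gt_1[where 'a='a] by simp
  then have "even (l * s)" using assms(12) by metis
  then have "even s" using assms(10) by simp
  with \<open>coprime r s\<close> have "odd r" by fastforce
  have "(2::'a) ^ s = 1"
    using perm_binomial_two_power_eq_1[OF bij assms(12)[symmetric] assms(10,11) \<open>odd r\<close>] .
  then have "of_nat (2 ^ s - 1) = (0::'a)" by (simp add: of_nat_diff)
  then have "CHAR('a) dvd 2 ^ s - 1" by (simp only: of_nat_eq_0_iff_char_dvd)
  then have "p dvd 2 ^ s - 1" using CHAR_eq_prime[OF assms(1,4)] by simp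
  moreover have "\<not> l dvd 2 * r + e * s"
    using perm_binomial_not_dvd[OF bij] assms(9,10,12) by simp
  ultimately show ?thesis using \<open>coprime r s\<close> by simp
qed

end
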